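(* Two tuples $(f_1,\dots,f_n),(g_1,\dots,g_n)\in M_{[0,1]}^n$ have the same type (over $\emptyset$) if and only if $\mathrm{im}(f_1,\dots,f_n)=\mathrm{im}(g_1,\dots,g_n)$.
   Context: $M_{[0,1]}$ is the set of continuous nondecreasing functions $f:[0,1]\to[0,1]$ with $f(0)=0$, $f(1)=1$, with the sup metric, regarded as a metric structure in the language of binary predicates $\varphi_\alpha$ ($\alpha\in\mathbb{Q}\cap[0,1]$), where $\varphi_\alpha(f,g)=f(t)$ for any $t$ with $f(t)+g(t)=\alpha$ (independent of the choice of $t$); this structure is interdefinable with Ben Yaacov's structure whose automorphism group is $\mathrm{Hom}^+([0,1])$, acting by $g\mapsto g\circ h^{-1}$. $\mathrm{im}(f_1,\dots,f_n)=\{(f_1(t),\dots,f_n(t)):t\in[0,1]\}\subseteq[0,1]^n$. *)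

theory Defs
  imports "HOL-Analysis.Analysis"
begin

text \<open>The underlying set of M_[0,1]: continuous nondecreasing self-maps of [0,1]
  fixing 0 and 1 (represented as real functions; only values on [0,1] matter).\<close>
definition Mset :: "(real \<Rightarrow> real) set" where
  "Mset = {f. continuous_on {0..1} f \<and> mono_on {0..1} f \<and> f 0 = 0 \<and> f 1 = 1
              \<and> f ` {0..1} \<subseteq> {0..1}}"

definition supdist :: "(real \<Rightarrow> real) \<Rightarrow> (real \<Rightarrow> real) \<Rightarrow> real" where
  "supdist f g = Sup ((\<lambda>t. \<bar>f t - g t\<bar>) ` {0..1})"

definition phi :: "real \<Rightarrow> (real \<Rightarrow> real) \<Rightarrow> (real \<Rightarrow> real) \<Rightarrow> real" where
  "phi \<alpha> f g = f (SOME t. t \<in> {0..1} \<and> f t + g t = \<alpha>)"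

text \<open>Continuous-logic formulas in the language {d} \<union> {phi_alpha : alpha \<in> Q \<inter> [0,1]},
  built with the (uniformly dense) system of connectives 1, 1-x, x/2, truncated subtraction,
  and the quantifiers sup and inf.\<close>
datatype form =
    Dist nat nat
  | Phi rat nat nat
  | One
  | Neg form
  | Half form
  | Minus form form
  | SupQ nat form
  | InfQ nat form

fun fv :: "form \<Rightarrow> nat set" where
  "fv (Dist i j) = {i, j}"
| "fv (Phi a i j) = {i, j}"
| "fv One = {}"
| "fv (Neg p) = fv p"
| "fv (Half p) = fv p"
| "fv (Minus p q) = fv p \<union> fv q"
| "fv (SupQ i p) = fv p - {i}"
| "fv (InfQ i p) = fv p - {i}"

fun in_lang :: "form \<Rightarrow> bool" where
  "in_lang (Dist i j) = True"
| "in_lang (Phi a i j) = (0 \<le> a \<and> a \<le> 1)"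
| "in_lang One = True"
| "in_lang (Neg p) = in_lang p"
| "in_lang (Half p) = in_lang p"
| "in_lang (Minus p q) = (in_lang p \<and> in_lang q)"
| "in_lang (SupQ i p) = in_lang p"
| "in_lang (InfQ i p) = in_lang p"

fun eval :: "(nat \<Rightarrow> real \<Rightarrow> real) \<Rightarrow> form \<Rightarrow> real" where
  "eval \<sigma> (Dist i j) = supdist (\<sigma> i) (\<sigma> j)"
| "eval \<sigma> (Phi a i j) = phi (of_rat a) (\<sigma> i) (\<sigma> j)"
| "eval \<sigma> One = 1"
| "eval \<sigma> (Neg p) = 1 - eval \<sigma> p"
| "eval \<sigma> (Half p) = eval \<sigma> p / 2"
| "eval \<sigma> (Minus p q) = max (eval \<sigma> p - eval \<sigma> q) 0"
| "eval \<sigma> (SupQ i p) = Sup ((\<lambda>h. eval (\<sigma>(i := h)) p) ` Mset)"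
| "eval \<sigma> (InfQ i p) = Inf ((\<lambda>h. eval (\<sigma>(i := h)) p) ` Mset)"

definition asg :: "(real \<Rightarrow> real) list \<Rightarrow> nat \<Rightarrow> real \<Rightarrow> real" where
  "asg fs i = (if i < length fs then fs ! i else id)"

definition same_type :: "(real \<Rightarrow> real) list \<Rightarrow> (real \<Rightarrow> real) list \<Rightarrow> bool" where
  "same_type fs gs \<longleftrightarrow> length fs = length gs \<and>
     (\<forall>p. in_lang p \<and> fv p \<subseteq> {..<length fs} \<longrightarrow> eval (asg fs) p = eval (asg gs) p)"

definition im :: "(real \<Rightarrow> real) list \<Rightarrow> real list set" where
  "im fs = (\<lambda>t. map (\<lambda>f. f t) fs) ` {0..1}"

end

theory Submission
  imports Defs
begin

(* If im(f) = im(g), then for every d > 0 the maps S = sum f_i + d id and T = sum g_i + d id are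
   increasing homeomorphisms of [0,1] onto [0, n + d], and k = S^-1 o T satisfies
   |g_i(t) - f_i(k t)| <= d: the point g(t) equals f(t') for some t', and since all f_j are
   nondecreasing, each |f_i(t') - f_i(k t)| is bounded by |sum f(t') - sum f(k t)| = d |k t - t|.
   Precomposition with an increasing homeomorphism is an automorphism, so it preserves the value
   of every formula, and formulas are Lipschitz in the sup metric; letting d -> 0 gives equal types.

   Conversely, if a = f(t0) is not in im(g), connectedness of [0,1] yields s with g_i(s) < a_i and
   a_j < g_j(s). Take beta rational slightly above a_i and consider
   inf_y max(0, phi_1(x_j, y) - a_j, a_i - phi_beta(x_i, y)). For f it is 0: choose y through the
   points (t0, beta - a_i) and (t1, 1 - f_j(t1)) with t1 slightly above t0. For g it is bounded
   away from 0: phi_1(g_j, y) <= a_j forces the crossing of g_j and 1 - y before s, and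
   phi_beta(g_i, y) >= a_i forces the crossing of g_i and beta - y after s, which contradicts
   monotonicity of y once beta - a_i < 1 - a_j. *)

section \<open>Elements of M_[0,1] and the predicates phi\<close>

lemma id_in_Mset: "id \<in> Mset"
  unfolding Mset_def by (auto intro: continuous_on_id mono_onI)

lemma Mset_nonempty: "Mset \<noteq> {}"
  using id_in_Mset by blast

lemma MsetD:
  assumes "f \<in> Mset"
  shows "continuous_on {0..1} f" "mono_on {0..1} f" "f 0 = 0" "f 1 = 1"
    and "t \<in> {0..1} \<Longrightarrow> 0 \<le> f t" "t \<in> {0..1} \<Longrightarrow> f t \<le> 1"
  using assms unfolding Mset_def image_subset_iff by auto

lemma Mset_monoD: "f \<in> Mset \<Longrightarrow> x \<in> {0..1} \<Longrightarrow> y \<in> {0..1} \<Longrightarrow> x \<le> y \<Longrightarrow> f x \<le> f y"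
  using MsetD(2) mono_onD by blast

lemma Mset_crossing:
  assumes "f \<in> Mset" "g \<in> Mset" "a \<in> {0..2}"
  obtains t where "t \<in> {0..1}" "f t + g t = a"
proof -
  have "continuous_on {0..1} (\<lambda>t. f t + g t)"
    using MsetD(1)[OF assms(1)] MsetD(1)[OF assms(2)] by (intro continuous_intros)
  moreover have "f 0 + g 0 \<le> a" "a \<le> f 1 + g 1"
    using MsetD(3,4)[OF assms(1)] MsetD(3,4)[OF assms(2)] assms(3) by auto
  ultimately show ?thesis
    using IVT'[of "\<lambda>t. f t + g t" 0 a 1] that by auto
qed

lemma phi_at_crossing:
  assumes f: "f \<in> Mset" and g: "g \<in> Mset" and t: "t \<in> {0..1}" "f t + g t = a"
  shows "phi a f g = f t"
proof -
  define s where "s = (SOME s. s \<in> {0..1} \<and> f s + g s = a)"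
  have s: "s \<in> {0..1}" "f s + g s = a"
    unfolding s_def using someI[of "\<lambda>s. s \<in> {0..1} \<and> f s + g s = a"] t by blast+
  have "f s = f t"
  proof (cases "s \<le> t")
    case True
    then have "f s \<le> f t" "g s \<le> g t" using s t f g Mset_monoD by auto
    then show ?thesis using s t by linarith
  next
    case False
    then have "f t \<le> f s" "g t \<le> g s" using s t f g Mset_monoD by auto
    then show ?thesis using s t by linarith
  qed
  then show ?thesis unfolding phi_def s_def by simp
qed

lemma phi_diag:
  assumes "f \<in> Mset" "a \<in> {0..2}"
  shows "phi a f f = a / 2"
proof -
  obtain t where "t \<in> {0..1}" "f t + f t = a" using Mset_crossing[OF assms(1,1,2)] .
  then show ?thesis using phi_at_crossing[OF assms(1,1)] by simp
qed

lemma phi_bounds: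
  assumes "f \<in> Mset" "g \<in> Mset" "a \<in> {0..2}"
  shows "0 \<le> phi a f g" "phi a f g \<le> 1"
proof -
  obtain t where "t \<in> {0..1}" "f t + g t = a" using Mset_crossing[OF assms] .
  then show "0 \<le> phi a f g" "phi a f g \<le> 1"
    using phi_at_crossing[OF assms(1,2)] MsetD(5,6)[OF assms(1)] by auto
qed

lemma in_lang_Phi_range: "in_lang (Phi a i j) \<Longrightarrow> (of_rat a :: real) \<in> {0..2}"
proof -
  assume "in_lang (Phi a i j)"
  then have "0 \<le> (of_rat a :: real)" "(of_rat a :: real) \<le> 1" by simp_all
  then show ?thesis unfolding atLeastAtMost_iff by linarith
qed

lemma Mset_abs_diff_le_1: "f \<in> Mset \<Longrightarrow> g \<in> Mset \<Longrightarrow> t \<in> {0..1} \<Longrightarrow> \<bar>f t - g t\<bar> \<le> 1"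
  using MsetD(5,6) by (fastforce simp: abs_le_iff)

lemma supdist_bounds:
  assumes "f \<in> Mset" "g \<in> Mset"
  shows "0 \<le> supdist f g" "supdist f g \<le> 1"
proof -
  have bdd: "bdd_above ((\<lambda>t. \<bar>f t - g t\<bar>) ` {0..1})"
    using Mset_abs_diff_le_1[OF assms] by (intro bdd_aboveI2)
  have "0 \<le> \<bar>f 0 - g 0\<bar>" by simp
  also have "\<dots> \<le> supdist f g" unfolding supdist_def by (rule cSUP_upper[OF _ bdd]) auto
  finally show "0 \<le> supdist f g" .
  show "supdist f g \<le> 1"
    unfolding supdist_def using Mset_abs_diff_le_1[OF assms] by (intro cSUP_least) auto
qed

lemma eval_bounds:
  "in_lang p \<Longrightarrow> \<forall>i\<in>fv p. \<sigma> i \<in> Mset \<Longrightarrow> 0 \<le> eval \<sigma> p \<and> eval \<sigma> p \<le> 1"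
proof (induction p arbitrary: \<sigma>)
  case (Dist i j)
  then show ?case using supdist_bounds[of "\<sigma> i" "\<sigma> j"] by simp
next
  case (Phi a i j)
  then show ?case using phi_bounds[of "\<sigma> i" "\<sigma> j" "of_rat a"] in_lang_Phi_range[of a i j] by simp
next
  case (Half p)
  then show ?case by fastforce
next
  case (Minus p q)
  then have "0 \<le> eval \<sigma> p \<and> eval \<sigma> p \<le> 1" "0 \<le> eval \<sigma> q \<and> eval \<sigma> q \<le> 1" by simp_all
  then show ?case by simp
next
  case (SupQ i p)
  have h: "0 \<le> eval (\<sigma>(i := h)) p \<and> eval (\<sigma>(i := h)) p \<le> 1" if "h \<in> Mset" for h
    using SupQ that by auto
  have "0 \<le> eval (\<sigma>(i := id)) p" using h id_in_Mset by auto
  also have "\<dots> \<le> (SUP h\<in>Mset. eval (\<sigma>(i := h)) p)"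
    by (rule cSUP_upper[OF id_in_Mset], rule bdd_aboveI2[where M = 1]) (use h in auto)
  finally show ?case using h by (auto intro!: cSUP_least simp: Mset_nonempty)
next
  case (InfQ i p)
  have h: "0 \<le> eval (\<sigma>(i := h)) p \<and> eval (\<sigma>(i := h)) p \<le> 1" if "h \<in> Mset" for h
    using InfQ that by auto
  have "(INF h\<in>Mset. eval (\<sigma>(i := h)) p) \<le> eval (\<sigma>(i := id)) p"
    by (rule cINF_lower[OF bdd_belowI2[where m = 0] id_in_Mset]) (use h in auto)
  also have "\<dots> \<le> 1" using h id_in_Mset by auto
  finally show ?case using h by (auto intro!: cINF_greatest simp: Mset_nonempty)
qed auto

section \<open>Formulas are Lipschitz in the sup metric\<close>

lemma cSUP_abs_diff_le:
  fixes A B :: "'a \<Rightarrow> real"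
  assumes "S \<noteq> {}" "bdd_above (A ` S)" "bdd_above (B ` S)"
    and "\<And>x. x \<in> S \<Longrightarrow> \<bar>A x - B x\<bar> \<le> c"
  shows "\<bar>(SUP x\<in>S. A x) - (SUP x\<in>S. B x)\<bar> \<le> c"
proof -
  have one_side: "(SUP x\<in>S. F x) \<le> (SUP x\<in>S. G x) + c"
    if "bdd_above (G ` S)" "\<And>x. x \<in> S \<Longrightarrow> F x \<le> G x + c" for F G :: "'a \<Rightarrow> real"
  proof (rule cSUP_least[OF assms(1)])
    fix x assume "x \<in> S"
    then show "F x \<le> (SUP x\<in>S. G x) + c"
      using that(2)[of x] cSUP_upper[OF _ that(1), of x] by linarith
  qed
  have "A x \<le> B x + c" "B x \<le> A x + c" if "x \<in> S" for x
    using assms(4)[OF that] by (auto simp: abs_le_iff)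
  then have "(SUP x\<in>S. A x) \<le> (SUP x\<in>S. B x) + c" "(SUP x\<in>S. B x) \<le> (SUP x\<in>S. A x) + c"
    by (auto intro!: one_side assms(2,3))
  then show ?thesis by linarith
qed

lemma cINF_abs_diff_le:
  fixes A B :: "'a \<Rightarrow> real"
  assumes "S \<noteq> {}" "bdd_below (A ` S)" "bdd_below (B ` S)"
    and "\<And>x. x \<in> S \<Longrightarrow> \<bar>A x - B x\<bar> \<le> c"
  shows "\<bar>(INF x\<in>S. A x) - (INF x\<in>S. B x)\<bar> \<le> c"
proof -
  have "\<bar>(SUP x\<in>S. - A x) - (SUP x\<in>S. - B x)\<bar> \<le> c"
    using assms by (intro cSUP_abs_diff_le) (auto simp: bdd_above_uminus_image abs_minus_commute)
  then show ?thesis by (simp add: Inf_real_def image_image abs_minus_commute)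
qed

definition uniformly_close :: "real \<Rightarrow> (real \<Rightarrow> real) \<Rightarrow> (real \<Rightarrow> real) \<Rightarrow> bool" where
  "uniformly_close e f g \<longleftrightarrow> (\<forall>t\<in>{0..1}. \<bar>f t - g t\<bar> \<le> e)"

lemma supdist_lipschitz:
  assumes "f \<in> Mset" "g \<in> Mset" "f' \<in> Mset" "g' \<in> Mset"
    and "uniformly_close e f f'" "uniformly_close e g g'"
  shows "\<bar>supdist f g - supdist f' g'\<bar> \<le> 2 * e"
  unfolding supdist_def
proof (rule cSUP_abs_diff_le)
  show "bdd_above ((\<lambda>t. \<bar>f t - g t\<bar>) ` {0..1})"
    using Mset_abs_diff_le_1[OF assms(1,2)] by (intro bdd_aboveI2)
  show "bdd_above ((\<lambda>t. \<bar>f' t - g' t\<bar>) ` {0..1})"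
    using Mset_abs_diff_le_1[OF assms(3,4)] by (intro bdd_aboveI2)
  fix t :: real assume "t \<in> {0..1}"
  then have "\<bar>f t - f' t\<bar> \<le> e" "\<bar>g t - g' t\<bar> \<le> e"
    using assms(5,6) unfolding uniformly_close_def by auto
  then show "\<bar>\<bar>f t - g t\<bar> - \<bar>f' t - g' t\<bar>\<bar> \<le> 2 * e"
    by (auto simp: abs_le_iff)
qed simp

lemma phi_lipschitz:
  assumes f: "f \<in> Mset" and g: "g \<in> Mset" and f': "f' \<in> Mset" and g': "g' \<in> Mset"
    and close: "uniformly_close e f f'" "uniformly_close e g g'" and a: "a \<in> {0..2}"
  shows "\<bar>phi a f g - phi a f' g'\<bar> \<le> e"
proof -
  obtain t where t: "t \<in> {0..1}" "f t + g t = a" using Mset_crossing[OF f g a] .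
  obtain t' where t': "t' \<in> {0..1}" "f' t' + g' t' = a" using Mset_crossing[OF f' g' a] .
  have near: "\<bar>f t' - f' t'\<bar> \<le> e" "\<bar>g t' - g' t'\<bar> \<le> e"
    using close t'(1) unfolding uniformly_close_def by auto
  have "\<bar>f t - f' t'\<bar> \<le> e"
  proof (cases "t \<le> t'")
    case True
    then have "f t \<le> f t'" "g t \<le> g t'" using Mset_monoD f g t t' by auto
    then show ?thesis using near t t' by (simp add: abs_le_iff; linarith)
  next
    case False
    then have "f t' \<le> f t" "g t' \<le> g t" using Mset_monoD f g t t' by auto
    then show ?thesis using near t t' by (simp add: abs_le_iff; linarith)
  qed
  then show ?thesis using phi_at_crossing[OF f g t] phi_at_crossing[OF f' g' t'] by simp
qed

lemma eval_lipschitz: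
  "in_lang p \<Longrightarrow> 0 \<le> e \<Longrightarrow>
    \<forall>i\<in>fv p. \<sigma> i \<in> Mset \<and> \<sigma>' i \<in> Mset \<and> uniformly_close e (\<sigma> i) (\<sigma>' i) \<Longrightarrow>
    \<bar>eval \<sigma> p - eval \<sigma>' p\<bar> \<le> 2 * real (size p + 1) * e"
proof (induction p arbitrary: \<sigma> \<sigma>')
  case (Dist i j)
  then show ?case using supdist_lipschitz[of "\<sigma> i" "\<sigma> j" "\<sigma>' i" "\<sigma>' j" e] by simp
next
  case (Phi a i j)
  then show ?case
    using phi_lipschitz[of "\<sigma> i" "\<sigma> j" "\<sigma>' i" "\<sigma>' j" e "of_rat a"] in_lang_Phi_range[of a i j] by simp
next
  case (Neg p)
  then have "\<bar>eval \<sigma> p - eval \<sigma>' p\<bar> \<le> 2 * real (size p + 1) * e" by simp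
  then show ?case using Neg.prems(2) by (simp add: abs_minus_commute algebra_simps)
next
  case (Half p)
  then have "\<bar>eval \<sigma> p - eval \<sigma>' p\<bar> \<le> 2 * real (size p + 1) * e" by simp
  then show ?case using Half.prems(2) by (simp add: algebra_simps)
next
  case (Minus p q)
  then have "\<bar>eval \<sigma> p - eval \<sigma>' p\<bar> \<le> 2 * real (size p + 1) * e"
    "\<bar>eval \<sigma> q - eval \<sigma>' q\<bar> \<le> 2 * real (size q + 1) * e" by auto
  then show ?case using Minus.prems(2) by (simp add: algebra_simps abs_le_iff) linarith
next
  case (SupQ i p)
  let ?c = "2 * real (size p + 1) * e"
  have close: "uniformly_close e h h" for h
    using SupQ.prems(2) unfolding uniformly_close_def by simp
  have bounds: "0 \<le> eval (\<rho>(i := h)) p \<and> eval (\<rho>(i := h)) p \<le> 1"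
    if "\<rho> = \<sigma> \<or> \<rho> = \<sigma>'" "h \<in> Mset" for \<rho> h
    by (rule eval_bounds) (use SupQ.prems that in auto)
  have "\<bar>eval (\<sigma>(i := h)) p - eval (\<sigma>'(i := h)) p\<bar> \<le> ?c" if "h \<in> Mset" for h
    by (rule SupQ.IH) (use SupQ.prems that close in auto)
  then have "\<bar>eval \<sigma> (SupQ i p) - eval \<sigma>' (SupQ i p)\<bar> \<le> ?c"
    unfolding eval.simps using bounds
    by (intro cSUP_abs_diff_le Mset_nonempty) (auto intro!: bdd_aboveI2[where M = 1])
  then show ?case using SupQ.prems(2) by (simp add: algebra_simps)
next
  case (InfQ i p)
  let ?c = "2 * real (size p + 1) * e"
  have close: "uniformly_close e h h" for h
    using InfQ.prems(2) unfolding uniformly_close_def by simp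
  have bounds: "0 \<le> eval (\<rho>(i := h)) p \<and> eval (\<rho>(i := h)) p \<le> 1"
    if "\<rho> = \<sigma> \<or> \<rho> = \<sigma>'" "h \<in> Mset" for \<rho> h
    by (rule eval_bounds) (use InfQ.prems that in auto)
  have "\<bar>eval (\<sigma>(i := h)) p - eval (\<sigma>'(i := h)) p\<bar> \<le> ?c" if "h \<in> Mset" for h
    by (rule InfQ.IH) (use InfQ.prems that close in auto)
  then have "\<bar>eval \<sigma> (InfQ i p) - eval \<sigma>' (InfQ i p)\<bar> \<le> ?c"
    unfolding eval.simps using bounds
    by (intro cINF_abs_diff_le Mset_nonempty) (auto intro!: bdd_belowI2[where m = 0])
  then show ?case using InfQ.prems(2) by (simp add: algebra_simps)
qed simp

section \<open>Invariance under increasing homeomorphisms\<close>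

definition increasing_homeo :: "(real \<Rightarrow> real) \<Rightarrow> (real \<Rightarrow> real) \<Rightarrow> bool" where
  "increasing_homeo k k' \<longleftrightarrow> homeomorphism {0..1} {0..1} k k' \<and> mono_on {0..1} k"

lemma increasing_homeo_inverse:
  assumes "increasing_homeo k k'"
  shows "increasing_homeo k' k"
proof -
  have hom: "homeomorphism {0..1} {0..1} k k'" and mono: "mono_on {0..1} k"
    using assms unfolding increasing_homeo_def by auto
  have "k' u \<le> k' v" if uv: "u \<in> {0..1}" "v \<in> {0..1}" "u \<le> v" for u v
  proof (rule ccontr)
    assume "\<not> k' u \<le> k' v"
    moreover have "k' u \<in> {0..1}" "k' v \<in> {0..1}"
      using hom uv(1,2) homeomorphism_image2 by blast+
    ultimately have "k (k' v) \<le> k (k' u)" by (intro mono_onD[OF mono]) auto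
    then have "u = v" using uv homeomorphism_apply2[OF hom] by force
    then show False using \<open>\<not> k' u \<le> k' v\<close> by simp
  qed
  then show ?thesis
    using homeomorphism_symD[OF hom] unfolding increasing_homeo_def by (auto intro: mono_onI)
qed

lemma increasing_homeo_endpoints:
  assumes "increasing_homeo k k'"
  shows "k 0 = 0" "k 1 = 1"
proof -
  have hom: "homeomorphism {0..1} {0..1} k k'" and mono: "mono_on {0..1} k"
    using assms unfolding increasing_homeo_def by auto
  have range: "k t \<in> {0..1}" "k' t \<in> {0..1}" if "t \<in> {0..1}" for t
    using that homeomorphism_image1[OF hom] homeomorphism_image2[OF hom] by blast+
  have "k 0 \<le> k (k' 0)" "k (k' 1) \<le> k 1"
    using range[of 0] range[of 1] by (auto intro!: mono_onD[OF mono])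
  then show "k 0 = 0" "k 1 = 1"
    using homeomorphism_apply2[OF hom, of 0] homeomorphism_apply2[OF hom, of 1]
      range[of 0] range[of 1] by auto
qed

lemma Mset_comp_increasing_homeo:
  assumes k: "increasing_homeo k k'" and f: "f \<in> Mset" and g: "\<forall>t\<in>{0..1}. g t = f (k t)"
  shows "g \<in> Mset"
proof -
  have hom: "homeomorphism {0..1} {0..1} k k'" and mono: "mono_on {0..1} k"
    using k unfolding increasing_homeo_def by auto
  have range: "k t \<in> {0..1}" if "t \<in> {0..1}" for t
    using that homeomorphism_image1[OF hom] by blast
  have "continuous_on {0..1} (\<lambda>t. f (k t))"
    by (rule continuous_on_compose2[OF MsetD(1)[OF f] homeomorphism_cont1[OF hom]])
      (use homeomorphism_image1[OF hom] in simp)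
  then have "continuous_on {0..1} g" by (rule continuous_on_eq) (use g in simp)
  moreover have "mono_on {0..1} g"
  proof (rule mono_onI)
    fix x y :: real assume xy: "x \<in> {0..1}" "y \<in> {0..1}" "x \<le> y"
    then have "k x \<le> k y" by (rule mono_onD[OF mono])
    then show "g x \<le> g y" using g range xy Mset_monoD[OF f] by simp
  qed
  moreover have "g 0 = 0" "g 1 = 1"
    using g increasing_homeo_endpoints[OF k] MsetD(3,4)[OF f] by auto
  moreover have "g ` {0..1} \<subseteq> {0..1}"
    using g range MsetD(5,6)[OF f] by auto
  ultimately show ?thesis unfolding Mset_def by blast
qed

lemma eval_update_image_increasing_homeo:
  assumes k: "increasing_homeo k k'"
    and inv: "\<And>\<sigma> \<sigma>'. \<forall>j\<in>fv p. \<sigma> j \<in> Mset \<and> (\<forall>t\<in>{0..1}. \<sigma>' j t = \<sigma> j (k t)) \<Longrightarrow>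
      eval \<sigma>' p = eval \<sigma> p"
    and \<sigma>: "\<forall>j\<in>fv p - {i}. \<sigma> j \<in> Mset \<and> (\<forall>t\<in>{0..1}. \<sigma>' j t = \<sigma> j (k t))"
  shows "(\<lambda>h. eval (\<sigma>'(i := h)) p) ` Mset = (\<lambda>h. eval (\<sigma>(i := h)) p) ` Mset"
proof (intro equalityI image_subsetI)
  fix h assume h: "h \<in> Mset"
  have hom: "homeomorphism {0..1} {0..1} k k'"
    using k unfolding increasing_homeo_def by auto
  have hk': "(\<lambda>t. h (k' t)) \<in> Mset"
    using Mset_comp_increasing_homeo[OF increasing_homeo_inverse[OF k] h] by simp
  have "eval (\<sigma>'(i := h)) p = eval (\<sigma>(i := (\<lambda>t. h (k' t)))) p"
    by (rule inv) (use \<sigma> hk' homeomorphism_apply1[OF hom] in auto)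
  then show "eval (\<sigma>'(i := h)) p \<in> (\<lambda>h. eval (\<sigma>(i := h)) p) ` Mset"
    using hk' by auto
next
  fix h assume h: "h \<in> Mset"
  have hk: "(\<lambda>t. h (k t)) \<in> Mset"
    using Mset_comp_increasing_homeo[OF k h] by simp
  have "eval (\<sigma>'(i := (\<lambda>t. h (k t)))) p = eval (\<sigma>(i := h)) p"
    by (rule inv) (use \<sigma> h in auto)
  then show "eval (\<sigma>(i := h)) p \<in> (\<lambda>h. eval (\<sigma>'(i := h)) p) ` Mset"
    using hk by (metis image_eqI)
qed

lemma eval_increasing_homeo_invariant:
  assumes k: "increasing_homeo k k'"
  shows "in_lang p \<Longrightarrow> \<forall>i\<in>fv p. \<sigma> i \<in> Mset \<and> (\<forall>t\<in>{0..1}. \<sigma>' i t = \<sigma> i (k t)) \<Longrightarrow>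
    eval \<sigma>' p = eval \<sigma> p"
proof (induction p arbitrary: \<sigma> \<sigma>')
  case (Dist i j)
  have "(\<lambda>t. \<bar>\<sigma>' i t - \<sigma>' j t\<bar>) ` {0..1} = (\<lambda>t. \<bar>\<sigma> i (k t) - \<sigma> j (k t)\<bar>) ` {0..1}"
    by (rule image_cong) (use Dist.prems(2) in auto)
  also have "\<dots> = (\<lambda>u. \<bar>\<sigma> i u - \<sigma> j u\<bar>) ` k ` {0..1}"
    by (simp add: image_image)
  also have "\<dots> = (\<lambda>u. \<bar>\<sigma> i u - \<sigma> j u\<bar>) ` {0..1}"
    using k homeomorphism_image1 unfolding increasing_homeo_def by metis
  finally have "(\<lambda>t. \<bar>\<sigma>' i t - \<sigma>' j t\<bar>) ` {0..1} = (\<lambda>u. \<bar>\<sigma> i u - \<sigma> j u\<bar>) ` {0..1}" .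
  then show ?case by (simp add: supdist_def)
next
  case (Phi a i j)
  have hom: "homeomorphism {0..1} {0..1} k k'"
    using k unfolding increasing_homeo_def by auto
  have M: "\<sigma> i \<in> Mset" "\<sigma> j \<in> Mset" using Phi by auto
  have M': "\<sigma>' i \<in> Mset" "\<sigma>' j \<in> Mset"
    using Mset_comp_increasing_homeo[OF k M(1)] Mset_comp_increasing_homeo[OF k M(2)] Phi.prems(2)
    by auto
  obtain s where s: "s \<in> {0..1}" "\<sigma> i s + \<sigma> j s = of_rat a"
    using Mset_crossing[OF M in_lang_Phi_range] Phi.prems(1) .
  have s': "k' s \<in> {0..1}" "k (k' s) = s"
    using s(1) homeomorphism_image2[OF hom] homeomorphism_apply2[OF hom] by auto
  then have "\<sigma>' i (k' s) = \<sigma> i s" "\<sigma>' j (k' s) = \<sigma> j s" using Phi.prems(2) by auto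
  then show ?case using phi_at_crossing[OF M s] phi_at_crossing[OF M' s'(1)] s(2) by simp
next
  case (SupQ i p)
  have lang: "in_lang p"
    and \<sigma>: "\<forall>j\<in>fv p - {i}. \<sigma> j \<in> Mset \<and> (\<forall>t\<in>{0..1}. \<sigma>' j t = \<sigma> j (k t))"
    using SupQ.prems by simp_all
  have "(\<lambda>h. eval (\<sigma>'(i := h)) p) ` Mset = (\<lambda>h. eval (\<sigma>(i := h)) p) ` Mset"
    by (rule eval_update_image_increasing_homeo[OF k SupQ.IH[OF lang] \<sigma>])
  then show ?case by simp
next
  case (InfQ i p)
  have lang: "in_lang p"
    and \<sigma>: "\<forall>j\<in>fv p - {i}. \<sigma> j \<in> Mset \<and> (\<forall>t\<in>{0..1}. \<sigma>' j t = \<sigma> j (k t))"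
    using InfQ.prems by simp_all
  have "(\<lambda>h. eval (\<sigma>'(i := h)) p) ` Mset = (\<lambda>h. eval (\<sigma>(i := h)) p) ` Mset"
    by (rule eval_update_image_increasing_homeo[OF k InfQ.IH[OF lang] \<sigma>])
  then show ?case by simp
next
  case (Minus p q)
  then have "eval \<sigma>' p = eval \<sigma> p" "eval \<sigma>' q = eval \<sigma> q" by auto
  then show ?case by simp
qed auto

section \<open>Equal images give equal types\<close>

lemma strict_mono_on_Icc_homeomorphism:
  fixes S :: "real \<Rightarrow> real"
  assumes ab: "a \<le> b" and cont: "continuous_on {a..b} S" and mono: "strict_mono_on {a..b} S"
  obtains S' where "homeomorphism {a..b} {S a..S b} S S'"
proof -
  have "S ` {a..b} = {S a..S b}"
  proof
    show "S ` {a..b} \<subseteq> {S a..S b}"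
      using ab by (auto intro!: strict_mono_on_leD[OF mono])
    show "{S a..S b} \<subseteq> S ` {a..b}"
    proof
      fix y assume "y \<in> {S a..S b}"
      then obtain x where "a \<le> x" "x \<le> b" "S x = y"
        using IVT'[of S a y b, OF _ _ ab cont] by auto
      then show "y \<in> S ` {a..b}" by auto
    qed
  qed
  then show ?thesis
    using homeomorphism_compact[OF compact_Icc cont _ strict_mono_on_imp_inj_on[OF mono]] that
    by blast
qed

lemma Mset_sum_list_plus_linear:
  assumes fs: "set fs \<subseteq> Mset" and d: "0 < d"
  shows "continuous_on {0..1} (\<lambda>t. (\<Sum>f\<leftarrow>fs. f t) + d * t)"
    and "strict_mono_on {0..1} (\<lambda>t. (\<Sum>f\<leftarrow>fs. f t) + d * t)"
    and "(\<Sum>f\<leftarrow>fs. f 0) = 0" "(\<Sum>f\<leftarrow>fs. f 1) = length fs"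
proof -
  have "continuous_on {0..1} (\<lambda>t. \<Sum>f\<leftarrow>fs. f t)"
    using fs
  proof (induction fs)
    case (Cons f fs)
    then have "continuous_on {0..1} f" "continuous_on {0..1} (\<lambda>t. \<Sum>g\<leftarrow>fs. g t)"
      using MsetD(1) by auto
    then show ?case by (simp add: continuous_on_add)
  qed simp
  then show "continuous_on {0..1} (\<lambda>t. (\<Sum>f\<leftarrow>fs. f t) + d * t)"
    by (intro continuous_intros)
  show "strict_mono_on {0..1} (\<lambda>t. (\<Sum>f\<leftarrow>fs. f t) + d * t)"
  proof (rule strict_mono_onI)
    fix x y :: real assume xy: "x \<in> {0..1}" "y \<in> {0..1}" "x < y"
    have "(\<Sum>f\<leftarrow>fs. f x) \<le> (\<Sum>f\<leftarrow>fs. f y)"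
      using fs xy by (intro sum_list_mono) (auto intro: Mset_monoD)
    moreover have "d * x < d * y" using d xy(3) by simp
    ultimately show "(\<Sum>f\<leftarrow>fs. f x) + d * x < (\<Sum>f\<leftarrow>fs. f y) + d * y" by linarith
  qed
  show "(\<Sum>f\<leftarrow>fs. f 0) = 0" "(\<Sum>f\<leftarrow>fs. f 1) = length fs"
    using fs by (induction fs) (auto simp: MsetD(3,4))
qed

lemma mono_on_diff_le_sum_list_diff:
  fixes fs :: "('a::linorder \<Rightarrow> real) list"
  assumes f: "f \<in> set fs" and mono: "\<forall>g\<in>set fs. mono_on A g" and uv: "u \<in> A" "v \<in> A"
  shows "\<bar>f v - f u\<bar> \<le> \<bar>(\<Sum>g\<leftarrow>fs. g v) - (\<Sum>g\<leftarrow>fs. g u)\<bar>"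
proof -
  have ordered: "\<bar>f y - f x\<bar> \<le> \<bar>(\<Sum>g\<leftarrow>fs. g y) - (\<Sum>g\<leftarrow>fs. g x)\<bar>"
    if xy: "x \<in> A" "y \<in> A" "x \<le> y" for x y
  proof -
    have nonneg: "0 \<le> g y - g x" if "g \<in> set fs" for g
      using mono that xy by (auto dest: mono_onD)
    have "f y - f x \<le> (\<Sum>g\<leftarrow>fs. g y - g x)"
      by (rule member_le_sum_list) (use f nonneg in auto)
    also have "\<dots> = (\<Sum>g\<leftarrow>fs. g y) - (\<Sum>g\<leftarrow>fs. g x)"
      by (rule sum_list_subtractf)
    finally show ?thesis using nonneg[OF f] by linarith
  qed
  show ?thesis
    using ordered[of u v] ordered[of v u] uv by (cases "u \<le> v") (auto simp: abs_minus_commute)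
qed

lemma im_eq_component_diff_le:
  assumes fs: "set fs \<subseteq> Mset" and len: "length fs = length gs" and im: "im fs = im gs"
    and i: "i < length fs" and t: "t \<in> {0..1}" and u: "u \<in> {0..1}"
  shows "\<bar>(gs ! i) t - (fs ! i) u\<bar> \<le> \<bar>(\<Sum>g\<leftarrow>gs. g t) - (\<Sum>f\<leftarrow>fs. f u)\<bar>"
proof -
  have "map (\<lambda>g. g t) gs \<in> im fs" using im t unfolding im_def by auto
  then obtain t' where t': "t' \<in> {0..1}" "map (\<lambda>g. g t) gs = map (\<lambda>f. f t') fs"
    unfolding im_def by auto
  have "(gs ! i) t = (fs ! i) t'"
    using nth_map[of i gs "\<lambda>g. g t"] nth_map[of i fs "\<lambda>f. f t'"] t'(2) i len by simp
  moreover have "(\<Sum>g\<leftarrow>gs. g t) = (\<Sum>f\<leftarrow>fs. f t')"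
    using t'(2) by simp
  moreover have "\<forall>f\<in>set fs. mono_on {0..1} f" using fs MsetD(2) by blast
  ultimately show ?thesis
    using mono_on_diff_le_sum_list_diff[of "fs ! i" fs "{0..1}" u t'] i t'(1) u by simp
qed

lemma increasing_homeo_conjugating:
  fixes S T :: "real \<Rightarrow> real"
  assumes S: "continuous_on {0..1} S" "strict_mono_on {0..1} S"
    and T: "continuous_on {0..1} T" "strict_mono_on {0..1} T"
    and ends: "S 0 = T 0" "S 1 = T 1"
  obtains k k' where "increasing_homeo k k'" "\<And>t. t \<in> {0..1} \<Longrightarrow> S (k t) = T t"
proof -
  obtain S' where S': "homeomorphism {0..1} {S 0..S 1} S S'"
    using strict_mono_on_Icc_homeomorphism[OF _ S] by auto
  obtain T' where T': "homeomorphism {0..1} {S 0..S 1} T T'"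
    using strict_mono_on_Icc_homeomorphism[OF _ T] ends by auto
  define k where "k = S' \<circ> T"
  have hom: "homeomorphism {0..1} {0..1} k (T' \<circ> S)"
    unfolding k_def using homeomorphism_compose[OF T' homeomorphism_symD[OF S']] .
  have k01: "k t \<in> {0..1}" if "t \<in> {0..1}" for t
    using homeomorphism_image1[OF hom] that by blast
  have Sk: "S (k t) = T t" if "t \<in> {0..1}" for t
  proof -
    have "T t \<in> {S 0..S 1}" using homeomorphism_image1[OF T'] that by blast
    then show ?thesis using homeomorphism_apply2[OF S'] unfolding k_def by simp
  qed
  have "mono_on {0..1} k"
  proof (rule mono_onI)
    fix x y :: real assume xy: "x \<in> {0..1}" "y \<in> {0..1}" "x \<le> y"
    then have "S (k x) \<le> S (k y)"
      using Sk strict_mono_on_leD[OF T(2)] by simp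
    then show "k x \<le> k y" using strict_mono_on_less_eq[OF S(2)] k01 xy by blast
  qed
  with hom show ?thesis using that Sk unfolding increasing_homeo_def by blast
qed

lemma im_eq_imp_uniformly_close_reparam:
  assumes fs: "set fs \<subseteq> Mset" and gs: "set gs \<subseteq> Mset" and len: "length fs = length gs"
    and im: "im fs = im gs" and d: "0 < d"
  obtains k k' where "increasing_homeo k k'"
    and "\<And>i. i < length fs \<Longrightarrow> uniformly_close d (gs ! i) (fs ! i \<circ> k)"
proof -
  define S where "S t = (\<Sum>f\<leftarrow>fs. f t) + d * t" for t
  define T where "T t = (\<Sum>g\<leftarrow>gs. g t) + d * t" for t
  note S_props = Mset_sum_list_plus_linear[OF fs d, folded S_def]
  note T_props = Mset_sum_list_plus_linear[OF gs d, folded T_def]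
  have "S 0 = T 0" "S 1 = T 1"
    using S_props(3,4) T_props(3,4) len unfolding S_def T_def by simp_all
  then obtain k k' where k: "increasing_homeo k k'" and Sk: "\<And>t. t \<in> {0..1} \<Longrightarrow> S (k t) = T t"
    using increasing_homeo_conjugating[OF S_props(1,2) T_props(1,2)] by blast
  have k01: "k t \<in> {0..1}" if "t \<in> {0..1}" for t
    using k homeomorphism_image1 that unfolding increasing_homeo_def by blast
  have "uniformly_close d (gs ! i) (fs ! i \<circ> k)" if i: "i < length fs" for i
    unfolding uniformly_close_def
  proof
    fix t :: real assume t: "t \<in> {0..1}"
    have "\<bar>(gs ! i) t - (fs ! i) (k t)\<bar> \<le> \<bar>(\<Sum>g\<leftarrow>gs. g t) - (\<Sum>f\<leftarrow>fs. f (k t))\<bar>"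
      by (rule im_eq_component_diff_le[OF fs len im i t k01[OF t]])
    also have "\<dots> = \<bar>d * (k t - t)\<bar>"
      using Sk[OF t] unfolding S_def T_def by (simp add: algebra_simps)
    also have "\<dots> \<le> d"
      using k01[OF t] t d by (simp add: abs_mult abs_le_iff mult_left_le)
    finally show "\<bar>(gs ! i) t - (fs ! i \<circ> k) t\<bar> \<le> d" by simp
  qed
  with k show ?thesis using that by blast
qed

lemma im_eq_imp_same_type:
  assumes fs: "set fs \<subseteq> Mset" and gs: "set gs \<subseteq> Mset" and len: "length fs = length gs"
    and im: "im fs = im gs"
  shows "same_type fs gs"
  unfolding same_type_def
proof (intro conjI allI impI)
  show "length fs = length gs" by (rule len)
  fix p assume p: "in_lang p \<and> fv p \<subseteq> {..<length fs}"
  have idx: "i < length fs" "i < length gs" if "i \<in> fv p" for i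
    using that p len by auto
  have asg: "asg fs i = fs ! i" "asg gs i = gs ! i" "fs ! i \<in> Mset" "gs ! i \<in> Mset"
    if "i \<in> fv p" for i
    using idx[OF that] by (auto simp: asg_def intro: subsetD[OF fs nth_mem] subsetD[OF gs nth_mem])
  have "eval (asg gs) p - eval (asg fs) p = 0"
  proof (rule dense_eq0_I)
    fix e :: real assume e: "0 < e"
    define d where "d = e / (2 * real (size p + 1))"
    have d: "0 < d" and de: "2 * real (size p + 1) * d = e"
      unfolding d_def using e by auto
    obtain k k' where k: "increasing_homeo k k'"
      and close: "\<And>i. i < length fs \<Longrightarrow> uniformly_close d (gs ! i) (fs ! i \<circ> k)"
      using im_eq_imp_uniformly_close_reparam[OF fs gs len im d] by blast
    have "eval (\<lambda>i. asg fs i \<circ> k) p = eval (asg fs) p"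
      by (rule eval_increasing_homeo_invariant[OF k]) (use p idx asg in auto)
    moreover have "asg fs i \<circ> k \<in> Mset" if "i \<in> fv p" for i
      by (rule Mset_comp_increasing_homeo[OF k]) (use asg[OF that] in auto)
    then have "\<bar>eval (asg gs) p - eval (\<lambda>i. asg fs i \<circ> k) p\<bar> \<le> 2 * real (size p + 1) * d"
      by (intro eval_lipschitz) (use p d idx asg close in auto)
    ultimately show "\<bar>eval (asg gs) p - eval (asg fs) p\<bar> \<le> e" using de by simp
  qed
  then show "eval (asg fs) p = eval (asg gs) p" by simp
qed

section \<open>Equal types give equal images\<close>

lemma not_in_im_separated:
  assumes gs: "set gs \<subseteq> Mset" and len: "length x = length gs"
    and notin: "x \<notin> im gs" and x: "\<forall>k<length gs. x ! k \<in> {0..1}"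
  obtains i j s where "i < length gs" "j < length gs" "s \<in> {0..1}"
    and "(gs ! i) s < x ! i" "x ! j < (gs ! j) s"
proof -
  let ?n = "length gs"
  define A where "A = (\<Inter>k<?n. {0..1} \<inter> (gs ! k) -` {..x ! k})"
  define B where "B = (\<Inter>k<?n. {0..1} \<inter> (gs ! k) -` {x ! k..})"
  have M: "gs ! k \<in> Mset" if "k < ?n" for k
    using gs nth_mem[OF that] by blast
  have "closed ({0..1} \<inter> (gs ! k) -` {..x ! k})" "closed ({0..1} \<inter> (gs ! k) -` {x ! k..})"
    if "k < ?n" for k
    using continuous_closed_preimage[OF MsetD(1)[OF M[OF that]]] by simp_all
  then have "closed A" "closed B"
    unfolding A_def B_def by (intro closed_INT; simp)+
  moreover have "0 \<in> A" "1 \<in> B"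
    using x MsetD(3,4)[OF M] unfolding A_def B_def by auto
  moreover have "A \<inter> B \<inter> {0..1} = {}"
  proof -
    have "map (\<lambda>g. g s) gs = x" if "s \<in> A" "s \<in> B" for s
    proof (rule nth_equalityI)
      show "length (map (\<lambda>g. g s) gs) = length x" using len by simp
      fix k assume "k < length (map (\<lambda>g. g s) gs)"
      then have k: "k < ?n" by simp
      then have "(gs ! k) s \<le> x ! k" "x ! k \<le> (gs ! k) s"
        using that k unfolding A_def B_def INT_iff by auto
      then show "map (\<lambda>g. g s) gs ! k = x ! k" using k by simp
    qed
    moreover have "map (\<lambda>g. g s) gs \<in> im gs" if "s \<in> {0..1}" for s
      using that unfolding im_def by blast
    ultimately show ?thesis using notin by blast
  qed
  moreover have "(0::real) \<in> {0..1}" "(1::real) \<in> {0..1}" by simp_all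
  ultimately have "\<not> {0..1} \<subseteq> A \<union> B"
    using connected_closedD[OF connected_Icc, of A B 0 1] by blast
  then obtain s where s: "s \<in> {0..1}" "s \<notin> A" "s \<notin> B" by blast
  moreover have "s \<in> A" if "\<forall>k<?n. (gs ! k) s \<le> x ! k"
    using that s(1) unfolding A_def INT_iff by auto
  moreover have "s \<in> B" if "\<forall>k<?n. x ! k \<le> (gs ! k) s"
    using that s(1) unfolding B_def INT_iff by auto
  ultimately obtain i j where "i < ?n" "x ! i < (gs ! i) s" "j < ?n" "(gs ! j) s < x ! j"
    by (meson not_le)
  then show ?thesis using that s(1) by blast
qed

lemma rat_unit_interval_between:
  fixes x y :: real
  assumes x: "x \<in> {0..1}" and xy: "x < y"
  obtains q where "q \<in> {0..1}" "x \<le> of_rat q" "of_rat q < y"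
proof (cases "x = 1")
  case True
  then show ?thesis using that[of 1] xy by simp
next
  case False
  then have "x < min 1 y" using x xy by auto
  then obtain r where r: "r \<in> \<rat>" "x < r" "r < min 1 y"
    using Rats_dense_in_real by blast
  then obtain q where q: "r = of_rat q" using Rats_cases by blast
  have "(0::real) < of_rat q" using r(2) x unfolding q atLeastAtMost_iff by linarith
  moreover have "(of_rat q::real) < 1" using r(3) unfolding q by simp
  ultimately have "q \<in> {0..1}" by simp
  then show ?thesis using that[of q] r unfolding q by simp
qed

lemma rat_unit_interval_approx:
  fixes a :: real
  assumes "a \<in> {0..1}" "0 < \<delta>"
  obtains q where "q \<in> {0..1}" "\<bar>of_rat q - a\<bar> \<le> \<delta>"
proof -
  obtain q where "q \<in> {0..1}" "max 0 (a - \<delta>) \<le> of_rat q" "of_rat q < a + \<delta>"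
    using rat_unit_interval_between[of "max 0 (a - \<delta>)" "a + \<delta>"] assms by auto
  then show ?thesis using that[of q] by (simp add: abs_le_iff)
qed

definition ramp :: "real \<Rightarrow> real \<Rightarrow> real \<Rightarrow> real" where
  "ramp a b x = max 0 (min 1 ((x - a) / (b - a)))"

lemma continuous_on_ramp: "a < b \<Longrightarrow> continuous_on S (ramp a b)"
  unfolding ramp_def by (intro continuous_intros) auto

lemma ramp_mono:
  assumes "a < b" "x \<le> y"
  shows "ramp a b x \<le> ramp a b y"
proof -
  have "(x - a) / (b - a) \<le> (y - a) / (b - a)" using assms by (simp add: divide_right_mono)
  then show ?thesis unfolding ramp_def by simp
qed

lemma ramp_eq_0: "a < b \<Longrightarrow> x \<le> a \<Longrightarrow> ramp a b x = 0"
  unfolding ramp_def by (simp add: divide_nonpos_pos)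

lemma ramp_eq_1: "a < b \<Longrightarrow> b \<le> x \<Longrightarrow> ramp a b x = 1"
  unfolding ramp_def by simp

lemma Mset_interpolate:
  assumes s: "0 < s1" "s1 < s2" "s2 < 1" and v: "0 \<le> v1" "v1 \<le> v2" "v2 \<le> 1"
  obtains h where "h \<in> Mset" "h s1 = v1" "h s2 = v2"
proof -
  define h where
    "h x = v1 * ramp 0 s1 x + (v2 - v1) * ramp s1 s2 x + (1 - v2) * ramp s2 1 x" for x
  have mono: "h x \<le> h y" if "x \<le> y" for x y
    unfolding h_def using s v that by (intro add_mono mult_left_mono ramp_mono) auto
  have "continuous_on {0..1} h"
    unfolding h_def using s by (intro continuous_intros continuous_on_ramp) auto
  moreover have "mono_on {0..1} h" using mono by (auto intro: mono_onI)
  moreover have "h 0 = 0" "h 1 = 1" "h s1 = v1" "h s2 = v2"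
    unfolding h_def using s by (simp_all add: ramp_eq_0 ramp_eq_1)
  moreover have "h x \<in> {0..1}" if "x \<in> {0..1}" for x
    using mono[of 0 x] mono[of x 1] that \<open>h 0 = 0\<close> \<open>h 1 = 1\<close> by auto
  then have "h ` {0..1} \<subseteq> {0..1}" by blast
  ultimately show ?thesis using that unfolding Mset_def by blast
qed

lemma phi_pair_lower_bound:
  assumes gi: "gi \<in> Mset" and gj: "gj \<in> Mset" and h: "h \<in> Mset" and \<beta>: "\<beta> \<in> {0..1}"
    and s: "s \<in> {0..1}" "a + r \<le> gj s" "gi s \<le> b - r" and gap: "\<beta> - b + 2 * r \<le> 1 - a"
  shows "r \<le> max (phi 1 gj h - a) (b - phi \<beta> gi h)"
proof (rule ccontr)
  assume "\<not> ?thesis"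
  then have near: "phi 1 gj h < a + r" "b - r < phi \<beta> gi h" by auto
  obtain t1 where t1: "t1 \<in> {0..1}" "gj t1 + h t1 = 1" using Mset_crossing[OF gj h, of 1] by auto
  obtain t2 where t2: "t2 \<in> {0..1}" "gi t2 + h t2 = \<beta>" using Mset_crossing[OF gi h, of \<beta>] \<beta> by auto
  have "gj t1 < gj s" "gi s < gi t2"
    using near s phi_at_crossing[OF gj h t1] phi_at_crossing[OF gi h t2] by auto
  moreover have "t1 < s" if "s \<le> t1"
    using Mset_monoD[OF gj s(1) t1(1) that] \<open>gj t1 < gj s\<close> by simp
  moreover have "s < t2" if "t2 \<le> s"
    using Mset_monoD[OF gi t2(1) s(1) that] \<open>gi s < gi t2\<close> by simp
  ultimately have "t1 \<le> t2" by linarith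
  then have "h t1 \<le> h t2" using Mset_monoD[OF h t1(1) t2(1)] by simp
  then show False
    using near gap t1 t2 phi_at_crossing[OF gj h t1] phi_at_crossing[OF gi h t2] by linarith
qed

lemma phi_pair_approx:
  assumes fi: "fi \<in> Mset" and fj: "fj \<in> Mset" and t0: "t0 \<in> {0..1}" "fj t0 = a" "fi t0 = b"
    and b: "0 < b" "b \<le> \<beta>" and gap: "\<beta> - b < 1 - a" and e: "0 < e"
  obtains h where "h \<in> Mset" "phi 1 fj h < a + e" "phi \<beta> fi h = b"
proof -
  have "0 < t0" using t0 b MsetD(3)[OF fi] by (cases "t0 = 0") auto
  have "t0 < 1" using t0 b gap MsetD(4)[OF fj] by (cases "t0 = 1") auto
  have "0 < min e ((1 - a) - (\<beta> - b))" using e gap by simp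
  then obtain \<delta> where \<delta>: "0 < \<delta>"
    "\<forall>t\<in>{0..1}. \<bar>t - t0\<bar> < \<delta> \<longrightarrow> \<bar>fj t - a\<bar> < min e ((1 - a) - (\<beta> - b))"
    using continuous_on_iff[THEN iffD1, OF MsetD(1)[OF fj], rule_format, OF t0(1)]
    unfolding dist_real_def t0(2) by blast
  define t1 where "t1 = t0 + min (\<delta> / 2) ((1 - t0) / 2)"
  have t1: "t0 < t1" "t1 < 1" "t1 \<in> {0..1}" "\<bar>t1 - t0\<bar> < \<delta>"
    unfolding t1_def using \<delta>(1) \<open>0 < t0\<close> \<open>t0 < 1\<close> by (auto simp: min_def field_simps)
  define c where "c = fj t1"
  have c: "c < a + e" "\<beta> - b \<le> 1 - c" "0 \<le> c"
    using \<delta>(2)[rule_format, OF t1(3,4)] Mset_monoD[OF fj t0(1) t1(3)] t1(1) t0(2) MsetD(5)[OF fj t1(3)]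
    unfolding c_def by auto
  obtain h where h: "h \<in> Mset" "h t0 = \<beta> - b" "h t1 = 1 - c"
    using Mset_interpolate[OF \<open>0 < t0\<close> t1(1,2), of "\<beta> - b" "1 - c"] b c by auto
  have "phi 1 fj h = c" using phi_at_crossing[OF fj h(1) t1(3)] h(3) unfolding c_def by simp
  moreover have "phi \<beta> fi h = b" using phi_at_crossing[OF fi h(1) t0(1)] h(2) t0(3) by simp
  ultimately show ?thesis using that h(1) c(1) by simp
qed

definition fmax :: "form \<Rightarrow> form \<Rightarrow> form" where
  "fmax p q = Neg (Minus (Neg p) (Minus q p))"

lemma eval_fmax:
  "eval \<sigma> p \<le> 1 \<Longrightarrow> eval \<sigma> q \<le> 1 \<Longrightarrow> eval \<sigma> (fmax p q) = max (eval \<sigma> p) (eval \<sigma> q)"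
  unfolding fmax_def by (auto simp: max_def)

text \<open>The language has no constant symbols; \<^term>\<open>Phi c j j\<close> serves as the constant c/2
  (lemma phi_diag).\<close>
definition pair_form :: "nat \<Rightarrow> nat \<Rightarrow> rat \<Rightarrow> rat \<Rightarrow> rat \<Rightarrow> nat \<Rightarrow> form" where
  "pair_form i j \<beta> a b y =
     InfQ y (fmax (Minus (Half (Phi 1 j y)) (Phi a j j)) (Minus (Phi b i i) (Half (Phi \<beta> i y))))"

lemma in_lang_pair_form:
  "\<beta> \<in> {0..1} \<Longrightarrow> a \<in> {0..1} \<Longrightarrow> b \<in> {0..1} \<Longrightarrow> in_lang (pair_form i j \<beta> a b y)"
  unfolding pair_form_def fmax_def by simp

lemma fv_pair_form: "y \<noteq> i \<Longrightarrow> y \<noteq> j \<Longrightarrow> fv (pair_form i j \<beta> a b y) = {i, j}"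
  unfolding pair_form_def fmax_def by auto

lemma eval_pair_form:
  assumes \<sigma>: "\<sigma> i \<in> Mset" "\<sigma> j \<in> Mset" and y: "y \<noteq> i" "y \<noteq> j"
    and rat: "\<beta> \<in> {0..1}" "a \<in> {0..1}" "b \<in> {0..1}"
  shows "eval \<sigma> (pair_form i j \<beta> a b y) =
    (INF h\<in>Mset. max 0 (max (phi 1 (\<sigma> j) h - of_rat a) (of_rat b - phi (of_rat \<beta>) (\<sigma> i) h)) / 2)"
proof -
  have ranges: "(of_rat \<beta> :: real) \<in> {0..2}" "(of_rat a :: real) \<in> {0..2}" "(of_rat b :: real) \<in> {0..2}"
    using rat in_lang_Phi_range[of \<beta> i y] in_lang_Phi_range[of a j j] in_lang_Phi_range[of b i i]
    by auto
  have "eval (\<sigma>(y := h)) (fmax (Minus (Half (Phi 1 j y)) (Phi a j j)) (Minus (Phi b i i) (Half (Phi \<beta> i y))))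
      = max 0 (max (phi 1 (\<sigma> j) h - of_rat a) (of_rat b - phi (of_rat \<beta>) (\<sigma> i) h)) / 2"
    if h: "h \<in> Mset" for h
  proof -
    have "phi 1 (\<sigma> j) h \<le> 1" "0 \<le> phi (of_rat \<beta>) (\<sigma> i) h"
      using phi_bounds[OF \<sigma>(2) h, of 1] phi_bounds[OF \<sigma>(1) h ranges(1)] by auto
    moreover obtain A B :: real where "of_rat a = A" "of_rat b = B" "0 \<le> A" "B \<le> 1"
      using rat by auto
    moreover have "phi (of_rat a) (\<sigma> j) (\<sigma> j) = of_rat a / 2" "phi (of_rat b) (\<sigma> i) (\<sigma> i) = of_rat b / 2"
      using phi_diag[OF \<sigma>(2) ranges(2)] phi_diag[OF \<sigma>(1) ranges(3)] by auto
    ultimately show ?thesis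
      using y by (subst eval_fmax) (auto simp: max_def)
  qed
  then show ?thesis unfolding pair_form_def eval.simps by (intro INF_cong) simp_all
qed

lemma eval_pair_form_lower_bound:
  assumes \<sigma>: "\<sigma> i \<in> Mset" "\<sigma> j \<in> Mset" and y: "y \<noteq> i" "y \<noteq> j"
    and rat: "\<beta> \<in> {0..1}" "a \<in> {0..1}" "b \<in> {0..1}"
    and s: "s \<in> {0..1}" "of_rat a + r \<le> \<sigma> j s" "\<sigma> i s \<le> of_rat b - r"
    and gap: "of_rat \<beta> - of_rat b + 2 * r \<le> 1 - of_rat a"
  shows "r / 2 \<le> eval \<sigma> (pair_form i j \<beta> a b y)"
  unfolding eval_pair_form[OF \<sigma> y rat]
proof (rule cINF_greatest[OF Mset_nonempty])
  fix h assume h: "h \<in> Mset"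
  have "(of_rat \<beta> :: real) \<in> {0..1}" using rat(1) by simp
  then have "r \<le> max (phi 1 (\<sigma> j) h - of_rat a) (of_rat b - phi (of_rat \<beta>) (\<sigma> i) h)"
    using phi_pair_lower_bound[OF \<sigma> h _ s gap] by blast
  then show "r / 2 \<le> max 0 (max (phi 1 (\<sigma> j) h - of_rat a) (of_rat b - phi (of_rat \<beta>) (\<sigma> i) h)) / 2"
    by (simp add: divide_right_mono)
qed

lemma eval_pair_form_upper_bound:
  assumes \<sigma>: "\<sigma> i \<in> Mset" "\<sigma> j \<in> Mset" and y: "y \<noteq> i" "y \<noteq> j"
    and rat: "\<beta> \<in> {0..1}" "a \<in> {0..1}" "b \<in> {0..1}"
    and t: "t \<in> {0..1}" "\<sigma> j t = u" "\<sigma> i t = v"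
    and v: "0 < v" "v \<le> of_rat \<beta>" and gap: "of_rat \<beta> - v < 1 - u" and e: "0 < e"
  shows "eval \<sigma> (pair_form i j \<beta> a b y) \<le> max 0 (max (u + e - of_rat a) (of_rat b - v)) / 2"
proof -
  obtain h where h: "h \<in> Mset" "phi 1 (\<sigma> j) h < u + e" "phi (of_rat \<beta>) (\<sigma> i) h = v"
    using phi_pair_approx[OF \<sigma> t v gap e] .
  have "eval \<sigma> (pair_form i j \<beta> a b y)
      \<le> max 0 (max (phi 1 (\<sigma> j) h - of_rat a) (of_rat b - phi (of_rat \<beta>) (\<sigma> i) h)) / 2"
    unfolding eval_pair_form[OF \<sigma> y rat]
    by (rule cINF_lower[OF _ h(1)]) (auto intro!: bdd_belowI2[where m = 0])
  also have "\<dots> \<le> max 0 (max (u + e - of_rat a) (of_rat b - v)) / 2"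
    by (intro divide_right_mono max.mono) (use h(2,3) in auto)
  finally show ?thesis .
qed

lemma same_type_not_separated:
  assumes fs: "set fs \<subseteq> Mset" and gs: "set gs \<subseteq> Mset" and len: "length fs = length gs"
    and st: "same_type fs gs" and ij: "i < length gs" "j < length gs"
    and t0: "t0 \<in> {0..1}" and s: "s \<in> {0..1}"
    and sep: "(gs ! i) s < (fs ! i) t0" "(fs ! j) t0 < (gs ! j) s"
  shows False
proof -
  have Mf: "fs ! k \<in> Mset" and Mg: "gs ! k \<in> Mset" and asg: "asg fs k = fs ! k" "asg gs k = gs ! k"
    if "k < length gs" for k
    using that len by (auto simp: asg_def intro: subsetD[OF fs nth_mem] subsetD[OF gs nth_mem])
  define a b where "a = (fs ! j) t0" and "b = (fs ! i) t0"
  have ab: "a \<in> {0..1}" "b \<in> {0..1}" "0 < b" "a < 1"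
    using MsetD(5,6)[OF Mf] MsetD(5)[OF Mg[OF ij(1)] s] MsetD(6)[OF Mg[OF ij(2)] s] t0 ij sep
    unfolding a_def b_def by auto
  obtain \<beta> where \<beta>: "\<beta> \<in> {0..1}" "b \<le> of_rat \<beta>" "of_rat \<beta> < b + (1 - a)"
    using rat_unit_interval_between[of b "b + (1 - a)"] ab by auto
  define m where "m = min (min ((gs ! j) s - a) (b - (gs ! i) s)) ((1 - a - (of_rat \<beta> - b)) / 2)"
  have m: "0 < m" "m \<le> (gs ! j) s - a" "m \<le> b - (gs ! i) s" "2 * m \<le> 1 - a - (of_rat \<beta> - b)"
    using sep \<beta>(3) unfolding m_def a_def b_def by (auto simp: min_def)
  then obtain a' b' where a': "a' \<in> {0..1}" "\<bar>of_rat a' - a\<bar> \<le> m / 8"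
    and b': "b' \<in> {0..1}" "\<bar>of_rat b' - b\<bar> \<le> m / 8"
    using rat_unit_interval_approx[OF ab(1)] rat_unit_interval_approx[OF ab(2)]
    by (metis divide_pos_pos zero_less_numeral)
  have approx: "a - m / 8 \<le> of_rat a'" "of_rat a' \<le> a + m / 8"
    "b - m / 8 \<le> of_rat b'" "of_rat b' \<le> b + m / 8"
    using a'(2) b'(2) unfolding abs_le_iff by linarith+
  define P where "P = pair_form i j \<beta> a' b' (length gs)"
  have "eval (asg fs) P = eval (asg gs) P"
    using st in_lang_pair_form[OF \<beta>(1) a'(1) b'(1)] fv_pair_form[of "length gs" i j] ij len
    unfolding same_type_def P_def by auto
  moreover have "m / 2 / 2 \<le> eval (asg gs) P"
    unfolding P_def using ij s \<beta> a'(1) b'(1) m approx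
    by (intro eval_pair_form_lower_bound[where s = s]) (auto simp: asg Mg)
  moreover have "eval (asg fs) P \<le> max 0 (max (a + m / 8 - of_rat a') (of_rat b' - b)) / 2"
    unfolding P_def using ij t0 \<beta> a'(1) b'(1) ab m
    by (intro eval_pair_form_upper_bound[where t = t0]) (auto simp: asg Mf a_def b_def)
  moreover have "max 0 (max (a + m / 8 - of_rat a') (of_rat b' - b)) / 2 \<le> m / 8"
    using approx m by (auto simp: max_def)
  ultimately show False using m by linarith
qed

lemma same_type_imp_im_subset:
  assumes fs: "set fs \<subseteq> Mset" and gs: "set gs \<subseteq> Mset" and len: "length fs = length gs"
    and st: "same_type fs gs"
  shows "im fs \<subseteq> im gs"
proof
  fix x assume "x \<in> im fs"
  then obtain t0 where t0: "t0 \<in> {0..1}" and x: "x = map (\<lambda>f. f t0) fs"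
    unfolding im_def by auto
  show "x \<in> im gs"
  proof (rule ccontr)
    assume notin: "x \<notin> im gs"
    have "length x = length gs" using x len by simp
    moreover have "\<forall>k<length gs. x ! k \<in> {0..1}"
      using x len t0 MsetD(5,6) subsetD[OF fs nth_mem] by auto
    ultimately obtain i j s where "i < length gs" "j < length gs" "s \<in> {0..1}"
      and "(gs ! i) s < x ! i" "x ! j < (gs ! j) s"
      using not_in_im_separated[OF gs _ notin] by blast
    then show False
      using same_type_not_separated[OF fs gs len st _ _ t0] x len by simp
  qed
qed

theorem mainTheorem14:
  fixes fs gs :: "(real \<Rightarrow> real) list" and n :: nat
  assumes "length fs = n" and "length gs = n"
    and "set fs \<subseteq> Mset" and "set gs \<subseteq> Mset"
  shows "same_type fs gs \<longleftrightarrow> im fs = im gs"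
proof
  assume st: "same_type fs gs"
  then have "same_type gs fs" unfolding same_type_def by auto
  then show "im fs = im gs"
    using same_type_imp_im_subset[OF assms(3,4) _ st] same_type_imp_im_subset[OF assms(4,3)] assms(1,2)
    by auto
next
  assume "im fs = im gs"
  then show "same_type fs gs" using im_eq_imp_same_type assms by simp
qed

end
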